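(* Let $a\ge 0$ and $i\ge 1$ be integers, and for $j\in\{1,\dots,2i\}$ define $f_a(i,j)=\frac{(a+1)(a+2)\cdots(a+2i)}{a+j}$. Then $$v_2\Big(\sum_{j=1}^{2i}f_a(i,j)\Big)\ge\begin{cases} i-1, & \text{if } 1\le i\le 3,\\ i, & \text{otherwise.}\end{cases}$$
   Context: $v_2$ denotes the $2$-adic valuation. *)

theory Defs
  imports "HOL-Computational_Algebra.Computational_Algebra"
begin

text \<open>f_a(i,j) = (a+1)(a+2)...(a+2i) / (a+j); the division is exact since 1 <= j <= 2i.\<close>
definition f :: "nat \<Rightarrow> nat \<Rightarrow> nat \<Rightarrow> nat" where
  "f a i j = (\<Prod>k=1..2*i. a + k) div (a + j)"

end

theory Submission
  imports Defs
begin

text \<open>Every term of the sum is already divisible by the claimed power of 2. Among the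
  \<open>2i\<close> consecutive factors \<open>a+1, \<dots>, a+2i\<close> exactly \<open>i\<close> are even, and \<open>f a i j\<close> omits only
  one of them, so it has at least \<open>i - 1\<close> even factors. If \<open>i \<ge> 4\<close>, the factors contain two
  multiples of 4, at least one of which survives the omission and contributes an extra 2.\<close>

lemma card_even_shifted_interval: "card {k \<in> {1..2*i}. even ((a::nat) + k)} = i"
proof (induction i)
  case 0
  then show ?case by simp
next
  case (Suc i)
  let ?new = "{k \<in> {2*i+1, 2*i+2}. even (a + k)}"
  have split: "{k \<in> {1..2 * Suc i}. even (a + k)} = {k \<in> {1..2*i}. even (a + k)} \<union> ?new"
    by auto
  have "card ?new = 1"
  proof (cases "even (a + 2*i + 1)")
    case True
    then have "?new = {2*i+1}" by auto
    then show ?thesis by simp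
  next
    case False
    then have "?new = {2*i+2}" by auto
    then show ?thesis by simp
  qed
  moreover have "{k \<in> {1..2*i}. even (a + k)} \<inter> ?new = {}" by auto
  ultimately show ?case
    using Suc by (subst split, subst card_Un_disjoint) auto
qed

lemma power_card_even_dvd_prod:
  fixes g :: "'a \<Rightarrow> nat"
  assumes "finite A"
  shows "2 ^ card {k \<in> A. even (g k)} dvd (\<Prod>k\<in>A. g k)"
proof -
  let ?E = "{k \<in> A. even (g k)}"
  have "(2::nat) ^ card ?E = (\<Prod>k\<in>?E. 2)" by simp
  also have "\<dots> dvd (\<Prod>k\<in>?E. g k)" by (rule prod_dvd_prod) auto
  also have "\<dots> dvd (\<Prod>k\<in>A. g k)" by (rule prod_dvd_prod_subset) (use assms in auto)
  finally show ?thesis .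
qed

lemma power_dvd_prod_shifted_interval_remove:
  fixes a :: nat
  assumes "finite S"
  shows "2 ^ (i - card S) dvd (\<Prod>k\<in>{1..2*i} - S. a + k)"
proof -
  let ?E = "{k \<in> {1..2*i}. even (a + k)}"
  have "i - card S \<le> card (?E - S)"
    using diff_card_le_card_Diff[OF assms, of ?E] card_even_shifted_interval[of i a] by simp
  also have "?E - S = {k \<in> {1..2*i} - S. even (a + k)}" by auto
  finally have "(2::nat) ^ (i - card S) dvd 2 ^ card {k \<in> {1..2*i} - S. even (a + k)}"
    by (rule le_imp_power_dvd)
  also have "\<dots> dvd (\<Prod>k\<in>{1..2*i} - S. a + k)"
    by (rule power_card_even_dvd_prod) simp
  finally show ?thesis .
qed

lemma f_eq_prod_remove:
  assumes "j \<in> {1..2*i}"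
  shows "f a i j = (\<Prod>k\<in>{1..2*i} - {j}. a + k)"
proof -
  have "(\<Prod>k=1..2*i. a + k) = (a + j) * (\<Prod>k\<in>{1..2*i} - {j}. a + k)"
    using assms by (simp add: prod.remove)
  moreover have "a + j > 0" using assms by auto
  ultimately show ?thesis unfolding f_def by simp
qed

lemma f_pos:
  assumes "j \<in> {1..2*i}"
  shows "f a i j > 0"
  using f_eq_prod_remove[OF assms] by (simp add: prod_pos)

lemma power_dvd_f:
  assumes "j \<in> {1..2*i}"
  shows "2 ^ (i - 1) dvd f a i j"
  using power_dvd_prod_shifted_interval_remove[of "{j}" i a] f_eq_prod_remove[OF assms] by simp

lemma obtain_multiple_of_four_shifted_interval:
  fixes a :: nat
  assumes "i \<ge> 4"
  obtains k where "k \<in> {1..2*i}" "k \<noteq> j" "4 dvd a + k"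
proof -
  define k1 where "k1 = 4 - a mod 4"
  have "a mod 4 < 4" "4 * (a div 4) + a mod 4 = a" by simp_all
  then have "a + k1 = 4 * (a div 4) + 4" unfolding k1_def by linarith
  then have k1: "1 \<le> k1" "k1 \<le> 4" "4 dvd a + k1"
    unfolding k1_def by auto
  then have "4 dvd a + (k1 + 4)" by (simp add: add.assoc[symmetric])
  then show ?thesis
    using that[of k1] that[of "k1 + 4"] k1 assms by (cases "k1 = j") auto
qed

lemma power_dvd_f_large:
  assumes "j \<in> {1..2*i}" "i \<ge> 4"
  shows "2 ^ i dvd f a i j"
proof -
  obtain k where k: "k \<in> {1..2*i}" "k \<noteq> j" "4 dvd a + k"
    using obtain_multiple_of_four_shifted_interval[OF assms(2)] .
  have rest: "2 ^ (i - 2) dvd (\<Prod>l\<in>{1..2*i} - {j, k}. a + l)"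
    using power_dvd_prod_shifted_interval_remove[of "{j, k}" i a] k(2) by (simp add: numeral_2_eq_2)
  have "i = Suc (Suc (i - 2))" using assms(2) by simp
  then have "(2::nat) ^ i = 4 * 2 ^ (i - 2)"
    by (metis mult.assoc power_Suc numeral_Bit0 mult_2)
  moreover have "(\<Prod>l\<in>{1..2*i} - {j}. a + l) = (a + k) * (\<Prod>l\<in>{1..2*i} - {j, k}. a + l)"
    using prod.remove[of "{1..2*i} - {j}" k] k by (simp add: Diff_insert2[symmetric])
  ultimately show ?thesis
    using f_eq_prod_remove[OF assms(1)] rest k(3) by (simp add: mult_dvd_mono)
qed

theorem lemma4p3:
  fixes a i :: nat
  assumes "i \<ge> 1"
  shows "multiplicity (2::nat) (\<Sum>j=1..2*i. f a i j) \<ge> (if i \<le> 3 then i - 1 else i)"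
proof -
  have dvd: "2 ^ (if i \<le> 3 then i - 1 else i) dvd (\<Sum>j=1..2*i. f a i j)"
    by (rule dvd_sum) (use power_dvd_f power_dvd_f_large in auto)
  have "0 < f a i 1" using f_pos assms by simp
  also have "f a i 1 \<le> (\<Sum>j=1..2*i. f a i j)"
    by (rule member_le_sum) (use assms in auto)
  finally have "(\<Sum>j=1..2*i. f a i j) \<noteq> 0" by (simp only: neq0_conv)
  then show ?thesis
    using multiplicity_geI[OF _ _ dvd] by simp
qed

end
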